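(* Fix $\zeta\in\mathbb{R}$ and $\omega\in\mathbb{C}$ with $0<\operatorname{Im}\omega<1/2$, and for $-1/2<\operatorname{Im} t<0$ let $$f(t) = - \frac{\operatorname{Li}_{2}(-e^{2\pi \zeta})+\operatorname{Li}_{2}(-e^{2\pi (t-\zeta)})-\operatorname{Li}_{2}(-e^{2\pi (t + \frac{i}{2})})}{2 \pi i} + i \pi \zeta^2 +2 i \pi t \omega +\pi t+\frac{i \pi }{6},\qquad g(t) = e^{\pi t-\frac{1}{2} \ln \left(1-e^{2 \pi t}\right)}.$$ Writing $t=t_1+it_2$, there are constants $C>0$ and $c>0$ such that $$\big|e^{f(t)/b^2} g(t)\big| \leq C e^{-\frac{c}{b^2}|t_1|}$$ for all sufficiently large $|t_1|$, all $t_2\in(-1/2,0)$, and all sufficiently small $b>0$.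
   Context: Principal branches: $\operatorname{Im}\ln z\in(-\pi,\pi]$ and $\operatorname{Li}_2(z)=-\int_0^z\frac{\ln(1-u)}{u}du$ for $z\in\mathbb{C}\setminus[1,\infty)$. *)

theory Defs
  imports "HOL-Complex_Analysis.Complex_Analysis"
begin

text \<open>Principal dilogarithm: Li2 z = - integral from 0 to z (along the straight segment)
  of Ln(1-u)/u, with the principal branch Ln (Im in (-pi,pi]). For z not in [1,infinity)
  the segment avoids the branch cut. At u = 0 the integrand value is irrelevant
  (a single point; in HOL Ln 1 / 0 = 0 anyway).\<close>
definition Li2 :: "complex \<Rightarrow> complex" where
  "Li2 z = - contour_integral (linepath 0 z) (\<lambda>u. Ln (1 - u) / u)"

definition f_fun :: "real \<Rightarrow> complex \<Rightarrow> complex \<Rightarrow> complex" where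
  "f_fun \<zeta> \<omega> t =
     - (Li2 (- exp (2 * of_real pi * of_real \<zeta>))
        + Li2 (- exp (2 * of_real pi * (t - of_real \<zeta>)))
        - Li2 (- exp (2 * of_real pi * (t + \<i> / 2)))) / (2 * of_real pi * \<i>)
     + \<i> * of_real pi * (of_real \<zeta>)\<^sup>2 + 2 * \<i> * of_real pi * t * \<omega>
     + of_real pi * t + \<i> * of_real pi / 6"

definition g_fun :: "complex \<Rightarrow> complex" where
  "g_fun t = exp (of_real pi * t - Ln (1 - exp (2 * of_real pi * t)) / 2)"

end

theory Submission
  imports Defs
begin

text \<open>
  Write \<open>t = t1 + i t2\<close> and \<open>\<Phi>(t) = Li2(-e^(2\<pi>(t - \<zeta>))) - Li2(-e^(2\<pi>(t + i/2)))\<close>, so that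
  \<open>Re f(t) = -(Im Li2(-e^(2\<pi>\<zeta>)) + Im \<Phi>(t))/(2\<pi>) - 2\<pi> Im(t \<omega>) + \<pi> t1\<close>.
  As \<open>t1 \<rightarrow> -\<infinity>\<close> both dilogarithm arguments tend to 0, so \<open>\<Phi>\<close> stays bounded and
  \<open>Re f(t) \<approx> -\<pi> (1 - 2 Im \<omega>) |t1|\<close>. Along a horizontal line the derivative of \<open>Im \<Phi>\<close> is
  \<open>2\<pi> (Im Ln(1 + e^(2\<pi>(t + i/2))) - Im Ln(1 + e^(2\<pi>(t - \<zeta>))))\<close>; it is nonnegative on the
  strip and tends to \<open>2\<pi>\<^sup>2\<close> as \<open>t1 \<rightarrow> +\<infinity>\<close>, because \<open>Im Ln(1 + e^\<xi>) \<approx> Im \<xi>\<close> for large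
  \<open>Re \<xi>\<close>. Hence \<open>Im \<Phi>\<close> grows like \<open>2\<pi>\<^sup>2 t1\<close> and \<open>Re f(t) \<approx> -2\<pi> Im \<omega> t1\<close>.
  So \<open>Re f(t) \<le> -c |t1|\<close> for large \<open>|t1|\<close>, uniformly in \<open>t2\<close>; as also \<open>|g(t)| \<le> 2\<close> for
  \<open>|t1| \<ge> 1\<close>, the estimate holds for every \<open>b > 0\<close>.
\<close>

definition cut_plane :: "complex set" where
  "cut_plane = {z. Im z \<noteq> 0} \<union> {z. Re z < 1}"

text \<open>The integrand of \<^const>\<open>Li2\<close>, extended continuously to \<open>0\<close>; on the star-shaped
  \<^const>\<open>cut_plane\<close> it has a primitive, which gives the derivative of \<^const>\<open>Li2\<close>.\<close>

definition Li2_integrand :: "complex \<Rightarrow> complex" where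
  "Li2_integrand u = (if u = 0 then -1 else Ln (1 - u) / u)"

lemma open_cut_plane: "open cut_plane"
  unfolding cut_plane_def
  by (intro open_Un open_halfspace_Re_lt open_Collect_neq continuous_intros)

lemma closed_segment_0_subset_cut_plane:
  assumes "z \<in> cut_plane"
  shows "closed_segment 0 z \<subseteq> cut_plane"
proof
  fix y assume "y \<in> closed_segment 0 z"
  then obtain u where u: "0 \<le> u" "u \<le> 1" "y = u *\<^sub>R z"
    by (auto simp: closed_segment_def)
  have "u * Re z < 1" if "Re z < 1"
  proof (cases "Re z \<ge> 0")
    case True
    then show ?thesis using u that mult_left_le_one_le[of "Re z" u] by linarith
  next
    case False
    then show ?thesis using u mult_nonneg_nonpos[of u "Re z"] by linarith
  qed
  then show "y \<in> cut_plane"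
    using assms u by (cases "u = 0") (auto simp: cut_plane_def)
qed

lemma starlike_cut_plane: "starlike cut_plane"
  unfolding starlike_def using closed_segment_0_subset_cut_plane
  by (intro bexI[of _ 0]) (auto simp: cut_plane_def)

lemma Li2_integrand_field_differentiable:
  assumes "z \<in> cut_plane" "z \<noteq> 0"
  shows "Li2_integrand field_differentiable at z"
proof -
  have "1 - z \<notin> \<real>\<^sub>\<le>\<^sub>0"
    using assms(1) by (auto simp: cut_plane_def complex_nonpos_Reals_iff)
  then have "(\<lambda>u. Ln (1 - u) / u) field_differentiable at z"
    using assms(2)
    by (auto intro!: field_differentiable_divide field_differentiable_diff
          field_differentiable_compose[OF _ field_differentiable_at_Ln, unfolded o_def])
  then show ?thesis
    by (rule field_differentiable_transform_within[of "norm z" _ UNIV, rotated 3])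
       (use assms in \<open>auto simp: Li2_integrand_def dist_norm\<close>)
qed

lemma isCont_Li2_integrand_0: "isCont Li2_integrand 0"
proof -
  have "((\<lambda>u. Ln (1 - u)) has_field_derivative -1) (at 0)"
    by (auto intro!: derivative_eq_intros)
  then have "((\<lambda>u. Ln (1 - u) / u) \<longlongrightarrow> -1) (at 0)"
    by (simp add: has_field_derivative_iff)
  moreover have "\<forall>\<^sub>F u in at 0. Ln (1 - u) / u = Li2_integrand u"
    by (auto simp: eventually_at_filter Li2_integrand_def)
  ultimately have "(Li2_integrand \<longlongrightarrow> -1) (at 0)"
    by (rule Lim_transform_eventually)
  then show ?thesis
    by (simp add: isCont_def Li2_integrand_def)
qed

lemma continuous_on_Li2_integrand: "continuous_on cut_plane Li2_integrand"
proof -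
  have "isCont Li2_integrand z" if "z \<in> cut_plane" for z
    using isCont_Li2_integrand_0 Li2_integrand_field_differentiable[OF that]
    by (cases "z = 0") (auto intro: field_differentiable_imp_continuous_at)
  then show ?thesis
    using open_cut_plane by (simp add: continuous_on_eq_continuous_at)
qed

lemma Li2_eq_primitive_diff:
  assumes prim: "\<And>u. u \<in> cut_plane \<Longrightarrow> (F has_field_derivative Li2_integrand u) (at u)"
    and z: "z \<in> cut_plane"
  shows "Li2 z = F 0 - F z"
proof (cases "z = 0")
  case False
  have "(Li2_integrand has_contour_integral
      (F (pathfinish (linepath 0 z)) - F (pathstart (linepath 0 z)))) (linepath 0 z)"
    by (rule contour_integral_primitive[OF _ valid_path_linepath])
       (use prim closed_segment_0_subset_cut_plane[OF z] in
         \<open>auto intro: has_field_derivative_at_within simp del: linepath_0\<close>)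
  then have "(Li2_integrand has_contour_integral (F z - F 0)) (linepath 0 z)"
    by simp
  then have "((\<lambda>u. Ln (1 - u) / u) has_contour_integral (F z - F 0)) (linepath 0 z)"
    unfolding has_contour_integral_def
    by (rule has_integral_spike_finite[of "{0}", rotated 2])
       (use False in \<open>auto simp: Li2_integrand_def linepath_def\<close>)
  then show ?thesis
    unfolding Li2_def by (simp add: contour_integral_unique)
qed (simp add: Li2_def)

lemma has_field_derivative_Li2:
  assumes "z \<in> cut_plane"
  shows "(Li2 has_field_derivative - Li2_integrand z) (at z)"
proof -
  obtain F where prim: "\<And>u. u \<in> cut_plane \<Longrightarrow> (F has_field_derivative Li2_integrand u) (at u)"
    using holomorphic_starlike_primitive[OF continuous_on_Li2_integrand starlike_cut_plane
        open_cut_plane, of "{0}"] Li2_integrand_field_differentiable by blast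
  have "((\<lambda>u. F 0 - F u) has_field_derivative - Li2_integrand z) (at z)"
    using prim[OF assms] by (auto intro!: derivative_eq_intros)
  then show ?thesis
    by (rule has_field_derivative_transform_within_open[OF _ open_cut_plane assms])
       (simp add: Li2_eq_primitive_diff[OF prim])
qed

lemma norm_Li2_le:
  assumes "norm z < 1/2"
  shows "norm (Li2 z) \<le> 2 * norm z"
proof (cases "(\<lambda>u. Ln (1 - u) / u) contour_integrable_on linepath 0 z")
  case True
  have "norm (Ln (1 - u) / u) \<le> 2" if "u \<in> closed_segment 0 z" for u
  proof (cases "u = 0")
    case False
    have "norm u \<le> norm z"
      using that by (auto simp: closed_segment_def mult_left_le_one_le)
    then have "norm (Ln (1 + - u)) \<le> 2 * norm (- u)"
      by (intro norm_Ln_le) (use assms in simp)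
    then show ?thesis
      using False by (simp add: norm_divide field_simps)
  qed simp
  then have "norm (contour_integral (linepath 0 z) (\<lambda>u. Ln (1 - u) / u)) \<le> 2 * norm (z - 0)"
    by (intro contour_integral_bound_linepath[OF True]) auto
  then show ?thesis
    by (simp add: Li2_def)
qed (simp add: Li2_def not_integrable_contour_integral)
  \<comment> \<open>a non-integrable integrand has contour integral \<open>0\<close> by convention\<close>

lemma Im_Ln_one_plus_exp:
  fixes \<xi> :: complex
  assumes "\<bar>Im \<xi>\<bar> < pi" "exp (- Re \<xi>) \<le> \<delta>" "\<delta> \<le> 1/4"
  shows "\<bar>Im (Ln (1 + exp \<xi>)) - Im \<xi>\<bar> \<le> 2 * \<delta>"
proof -
  define w where "w = 1 + exp (- \<xi>)"
  have "norm (Ln w) \<le> 2 * norm (exp (- \<xi>))"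
    unfolding w_def by (rule norm_Ln_le) (use assms in simp)
  then have \<eta>: "\<bar>Im (Ln w)\<bar> \<le> 2 * \<delta>"
    using abs_Im_le_cmod[of "Ln w"] assms(2) by simp
  have "w \<noteq> 0"
  proof
    assume "w = 0"
    then have "norm (exp (- \<xi>)) = 1"
      by (simp add: w_def add_eq_0_iff)
    then show False
      using assms(2,3) by simp
  qed
  have Im_w: "Im w = - exp (- Re \<xi>) * sin (Im \<xi>)"
    by (simp add: w_def Im_exp)
  \<comment> \<open>\<open>Im w\<close> and \<open>Im \<xi>\<close> have opposite signs, so \<open>\<xi> + Ln w\<close> stays in the principal strip\<close>
  have strip: "-pi < Im \<xi> + Im (Ln w) \<and> Im \<xi> + Im (Ln w) \<le> pi"
  proof (cases "0 \<le> Im \<xi>")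
    case True
    then have "Im w \<le> 0"
      using assms(1) sin_ge_zero[of "Im \<xi>"] by (simp add: Im_w)
    then have "Im (Ln w) \<le> 0"
      using Im_Ln_pos_lt[OF \<open>w \<noteq> 0\<close>] \<eta> assms(3) pi_gt3 by linarith
    then show ?thesis
      using True assms(1,3) \<eta> pi_gt3 by linarith
  next
    case False
    then have "0 < sin (- Im \<xi>)"
      using assms(1) by (intro sin_gt_zero) auto
    then have "0 < Im (Ln w)"
      using Im_Ln_pos_lt_imp[of w] by (simp add: Im_w mult_pos_neg)
    then show ?thesis
      using False assms(1,3) \<eta> pi_gt3 by linarith
  qed
  have "Ln (1 + exp \<xi>) = Ln (exp \<xi> * w)"
    by (simp add: w_def distrib_left exp_minus add.commute)
  also have "\<dots> = \<xi> + Ln w"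
    using strip assms(1) \<open>w \<noteq> 0\<close> by (simp add: Ln_times_simple)
  finally show ?thesis
    using \<eta> by simp
qed

lemma has_real_derivative_ge_imp_diff_ge:
  fixes f f' :: "real \<Rightarrow> real"
  assumes "a \<le> b"
    and "\<And>x. a \<le> x \<Longrightarrow> x \<le> b \<Longrightarrow> (f has_real_derivative f' x) (at x)"
    and "\<And>x. a \<le> x \<Longrightarrow> x \<le> b \<Longrightarrow> m \<le> f' x"
  shows "m * (b - a) \<le> f b - f a"
proof (cases "a = b")
  case False
  then obtain z where "a < z" "z < b" "f b - f a = (b - a) * f' z"
    using MVT2[of a b f f'] assms(1,2) by force
  then show ?thesis
    using assms(3)[of z] mult_right_mono[of m "f' z" "b - a"] by (simp add: mult.commute)
qed simp

lemma exp_minus_le: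
  fixes \<delta> y :: real
  assumes "0 < \<delta>" "1/\<delta> \<le> y"
  shows "exp (- y) \<le> \<delta>"
proof -
  have "1/\<delta> \<le> exp y"
    using exp_ge_add_one_self[of y] assms(2) by linarith
  then show ?thesis
    using assms(1) by (simp add: exp_minus field_simps)
qed

lemma exp_two_pi_le_third:
  fixes x :: real
  assumes "x \<le> -1"
  shows "exp (2 * pi * x) \<le> 1/3"
  using exp_minus_le[of "1/3" "- (2 * pi * x)"] assms pi_gt3
    mult_left_mono[of x "-1" "2 * pi"] by simp

lemma two_pi_strip:
  fixes x :: real
  assumes "-1/2 < x" "x < 0"
  shows "-pi < 2 * pi * x" "2 * pi * x < 0" "sin (2 * pi * x) < 0"
proof -
  show "-pi < 2 * pi * x"
    using mult_strict_left_mono[OF assms(1), of "2 * pi"] by simp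
  moreover show "2 * pi * x < 0"
    using assms(2) by (simp add: mult_pos_neg)
  ultimately show "sin (2 * pi * x) < 0"
    using sin_gt_zero[of "- (2 * pi * x)"] by simp
qed

definition Phi :: "real \<Rightarrow> complex \<Rightarrow> complex" where
  "Phi \<zeta> t = Li2 (- exp (2 * of_real pi * (t - of_real \<zeta>)))
             - Li2 (- exp (2 * of_real pi * (t + \<i> / 2)))"

definition Phi' :: "real \<Rightarrow> complex \<Rightarrow> complex" where
  "Phi' \<zeta> t = 2 * of_real pi * (Ln (1 + exp (2 * of_real pi * (t + \<i> / 2)))
             - Ln (1 + exp (2 * of_real pi * (t - of_real \<zeta>))))"

lemma Im_exp_strip:
  assumes "-1/2 < Im t" "Im t < 0"
  shows "Im (exp (2 * of_real pi * (t - of_real \<zeta>))) < 0"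
    and "0 < Im (exp (2 * of_real pi * (t + \<i> / 2)))"
proof -
  have "Im (2 * of_real pi * (t + \<i> / 2)) = 2 * pi * Im t + pi"
    by (simp add: algebra_simps)
  then show "0 < Im (exp (2 * of_real pi * (t + \<i> / 2)))"
    using two_pi_strip(3)[OF assms] by (simp only: Im_exp sin_periodic_pi) (simp add: mult_pos_neg)
  show "Im (exp (2 * of_real pi * (t - of_real \<zeta>))) < 0"
    using two_pi_strip(3)[OF assms] by (simp add: Im_exp mult_pos_neg)
qed

lemma has_field_derivative_Li2_minus_exp:
  assumes "- exp z \<in> cut_plane"
  shows "((\<lambda>z. Li2 (- exp z)) has_field_derivative - Ln (1 + exp z)) (at z)"
proof -
  have "((\<lambda>z. Li2 (- exp z)) has_field_derivative - Li2_integrand (- exp z) * - exp z) (at z)"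
    by (rule DERIV_chain2[where f = Li2 and g = "\<lambda>z. - exp z", OF has_field_derivative_Li2[OF assms]])
       (auto intro!: derivative_eq_intros)
  then show ?thesis
    by (simp add: Li2_integrand_def)
qed

lemma has_field_derivative_Phi:
  assumes "-1/2 < Im t" "Im t < 0"
  shows "(Phi \<zeta> has_field_derivative Phi' \<zeta> t) (at t)"
proof -
  have chain: "((\<lambda>t. Li2 (- exp (2 * of_real pi * (t + c)))) has_field_derivative
      - Ln (1 + exp (2 * of_real pi * (t + c))) * (2 * of_real pi)) (at t)"
    if "- exp (2 * of_real pi * (t + c)) \<in> cut_plane" for c
    by (rule DERIV_chain2[where f = "\<lambda>z. Li2 (- exp z)" and g = "\<lambda>t. 2 * of_real pi * (t + c)",
          OF has_field_derivative_Li2_minus_exp[OF that]])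
       (auto intro!: derivative_eq_intros)
  have "- exp (2 * of_real pi * (t + - of_real \<zeta>)) \<in> cut_plane"
    "- exp (2 * of_real pi * (t + \<i> / 2)) \<in> cut_plane"
    using Im_exp_strip(1)[OF assms, of \<zeta>] Im_exp_strip(2)[OF assms] by (auto simp: cut_plane_def)
  from DERIV_diff[OF this[THEN chain]]
  show ?thesis
    by (simp add: Phi_def[abs_def] Phi'_def algebra_simps)
qed

lemma has_real_derivative_Im_Phi:
  assumes "-1/2 < t2" "t2 < 0"
  shows "((\<lambda>s. Im (Phi \<zeta> (Complex s t2))) has_real_derivative Im (Phi' \<zeta> (Complex s t2))) (at s)"
proof -
  have "((\<lambda>z. Phi \<zeta> (z + \<i> * of_real t2)) has_field_derivative
      Phi' \<zeta> (of_real s + \<i> * of_real t2) * 1) (at (of_real s))"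
    by (rule DERIV_chain2[OF has_field_derivative_Phi])
       (use assms in \<open>auto intro!: derivative_eq_intros\<close>)
  then have "((\<lambda>x. Phi \<zeta> (of_real x + \<i> * of_real t2)) has_vector_derivative
      Phi' \<zeta> (of_real s + \<i> * of_real t2)) (at s)"
    using has_vector_derivative_real_field by fastforce
  then show ?thesis
    using has_field_derivative_Im by (fastforce simp: Complex_eq)
qed

lemma Im_Ln_neg: "Im z < 0 \<Longrightarrow> Im (Ln z) < 0"
  by (metis Arg_eq_Im_Ln Arg_neg_iff less_irrefl zero_complex.sel(2))

lemma Im_Phi'_nonneg:
  assumes "-1/2 < Im t" "Im t < 0"
  shows "0 \<le> Im (Phi' \<zeta> t)"
proof -
  have "0 < Im (Ln (1 + exp (2 * of_real pi * (t + \<i> / 2))))"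
    using Im_Ln_pos_lt_imp Im_exp_strip(2)[OF assms] by simp
  moreover have "Im (Ln (1 + exp (2 * of_real pi * (t - of_real \<zeta>)))) < 0"
    using Im_Ln_neg Im_exp_strip(1)[OF assms, of \<zeta>] by simp
  ultimately show ?thesis
    by (simp add: Phi'_def)
qed

lemma Im_Phi'_ge:
  assumes "-1/2 < t2" "t2 < 0" "\<delta> \<le> 1/4"
    and "exp (- (2 * pi * s)) \<le> \<delta>" "exp (- (2 * pi * (s - \<zeta>))) \<le> \<delta>"
  shows "2 * pi * (pi - 4 * \<delta>) \<le> Im (Phi' \<zeta> (Complex s t2))"
proof -
  have "\<bar>Im (Ln (1 + exp (2 * of_real pi * (Complex s t2 + \<i> / 2)))) - (2 * pi * t2 + pi)\<bar> \<le> 2 * \<delta>"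
    using Im_Ln_one_plus_exp[of "2 * of_real pi * (Complex s t2 + \<i> / 2)" \<delta>]
      two_pi_strip[OF assms(1,2)] assms(3,4) by (simp add: algebra_simps)
  moreover have "\<bar>Im (Ln (1 + exp (2 * of_real pi * (Complex s t2 - of_real \<zeta>)))) - 2 * pi * t2\<bar> \<le> 2 * \<delta>"
    using Im_Ln_one_plus_exp[of "2 * of_real pi * (Complex s t2 - of_real \<zeta>)" \<delta>]
      two_pi_strip[OF assms(1,2)] assms(3,5) by (simp add: algebra_simps)
  ultimately have "pi - 4 * \<delta> \<le> Im (Phi' \<zeta> (Complex s t2)) / (2 * pi)"
    by (simp add: Phi'_def abs_le_iff)
  then show ?thesis
    by (simp add: field_simps)
qed

lemma abs_Im_Phi_le:
  assumes "s \<le> - \<bar>\<zeta>\<bar> - 1"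
  shows "\<bar>Im (Phi \<zeta> (Complex s t2))\<bar> \<le> 2"
proof -
  have "exp (2 * pi * (s - \<zeta>)) \<le> 1/3" "exp (2 * pi * s) \<le> 1/3"
    using exp_two_pi_le_third[of "s - \<zeta>"] exp_two_pi_le_third[of s] assms by auto
  then have "norm (Li2 (- exp (2 * of_real pi * (Complex s t2 - of_real \<zeta>)))) \<le> 1"
    "norm (Li2 (- exp (2 * of_real pi * (Complex s t2 + \<i> / 2)))) \<le> 1"
    using norm_Li2_le[of "- exp (2 * of_real pi * (Complex s t2 - of_real \<zeta>))"]
      norm_Li2_le[of "- exp (2 * of_real pi * (Complex s t2 + \<i> / 2))"] by simp_all
  then have "norm (Phi \<zeta> (Complex s t2)) \<le> 2"
    unfolding Phi_def using norm_triangle_ineq4 by (smt (verit))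
  then show ?thesis
    using abs_Im_le_cmod by (smt (verit))
qed

lemma Im_Phi_ge_linear:
  assumes "0 < \<epsilon>"
  obtains S where "0 \<le> S"
    "\<And>s t2. S \<le> s \<Longrightarrow> -1/2 < t2 \<Longrightarrow> t2 < 0 \<Longrightarrow>
       2 * pi * (pi - \<epsilon>) * (s - S) - 2 \<le> Im (Phi \<zeta> (Complex s t2))"
proof -
  define \<delta> where "\<delta> = min (1/4) (\<epsilon>/4)"
  define S where "S = \<bar>\<zeta>\<bar> + 1/\<delta>"
  have \<delta>: "0 < \<delta>" "\<delta> \<le> 1/4" "4 * \<delta> \<le> \<epsilon>"
    using assms by (auto simp: \<delta>_def)
  have S_nonneg: "0 \<le> S"
    using \<delta> by (simp add: S_def)
  have "2 * pi * (pi - \<epsilon>) * (s - S) - 2 \<le> Im (Phi \<zeta> (Complex s t2))"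
    if "S \<le> s" and t2: "-1/2 < t2" "t2 < 0" for s t2
  proof -
    define h where "h x = Im (Phi \<zeta> (Complex x t2))" for x
    have hd: "(h has_real_derivative Im (Phi' \<zeta> (Complex x t2))) (at x)" for x
      unfolding h_def by (rule has_real_derivative_Im_Phi[OF t2])
    define s0 where "s0 = - \<bar>\<zeta>\<bar> - 1"
    have "-2 \<le> h s0"
      using abs_Im_Phi_le[of s0 \<zeta> t2] by (simp add: h_def s0_def abs_le_iff)
    moreover have "0 * (S - s0) \<le> h S - h s0"
      by (rule has_real_derivative_ge_imp_diff_ge[OF _ hd])
         (use S_nonneg t2 Im_Phi'_nonneg in \<open>auto simp: s0_def\<close>)
    moreover have "2 * pi * (pi - \<epsilon>) * (s - S) \<le> h s - h S"
    proof (rule has_real_derivative_ge_imp_diff_ge[OF that(1) hd])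
      fix x assume "S \<le> x"
      then have "1/\<delta> \<le> x" "1/\<delta> \<le> x - \<zeta>"
        by (auto simp: S_def)
      moreover have "x \<le> 2 * pi * x" "x - \<zeta> \<le> 2 * pi * (x - \<zeta>)"
        using calculation \<delta>(1) pi_gt3 by (auto intro!: mult_right_mono[of 1 "2 * pi", simplified]
            order_trans[OF _ calculation(1)] order_trans[OF _ calculation(2)])
      ultimately have "2 * pi * (pi - 4 * \<delta>) \<le> Im (Phi' \<zeta> (Complex x t2))"
        using Im_Phi'_ge[OF t2 \<delta>(2)] exp_minus_le[OF \<delta>(1)] by force
      then show "2 * pi * (pi - \<epsilon>) \<le> Im (Phi' \<zeta> (Complex x t2))"
        using \<delta>(3) by (smt (verit) mult_left_mono pi_gt_zero)
    qed
    ultimately show ?thesis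
      by (simp add: h_def)
  qed
  with S_nonneg show ?thesis
    using that by blast
qed

lemma Re_f_fun:
  "Re (f_fun \<zeta> \<omega> t) =
     - (Im (Li2 (- exp (2 * of_real pi * of_real \<zeta>))) + Im (Phi \<zeta> t)) / (2 * pi)
     - 2 * pi * Im (t * \<omega>) + pi * Re t"
proof -
  have "Re (- z / (2 * of_real pi * \<i>)) = - Im z / (2 * pi)" for z
    by (simp add: Re_divide power2_eq_square field_simps)
  then show ?thesis
    by (simp add: f_fun_def Phi_def diff_divide_distrib add_divide_distrib algebra_simps)
qed

lemma Re_f_fun_le:
  assumes "-1/2 < t2" "t2 < 0"
  shows "Re (f_fun \<zeta> \<omega> (Complex t1 t2)) \<le>
     norm (Li2 (- exp (2 * of_real pi * of_real \<zeta>))) / (2 * pi) + pi * \<bar>Re \<omega>\<bar>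
     - Im (Phi \<zeta> (Complex t1 t2)) / (2 * pi) + pi * (1 - 2 * Im \<omega>) * t1"
proof -
  let ?A = "Li2 (- exp (2 * of_real pi * of_real \<zeta>))"
  have "- Im ?A / (2 * pi) \<le> norm ?A / (2 * pi)"
    using abs_Im_le_cmod[of ?A] by (intro divide_right_mono) auto
  moreover have "- (t2 * Re \<omega>) \<le> \<bar>Re \<omega>\<bar> / 2"
    using assms mult_right_mono[of "- t2" "1/2" "\<bar>Re \<omega>\<bar>"] abs_ge_self[of "Re \<omega>"]
      abs_ge_minus_self[of "Re \<omega>"] by (cases "Re \<omega> \<ge> 0") (auto simp: mult_nonpos_nonpos)
  then have "- (2 * pi * (t2 * Re \<omega>)) \<le> pi * \<bar>Re \<omega>\<bar>"
    using mult_left_mono[of _ _ "2 * pi"] by fastforce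
  moreover have "Re (f_fun \<zeta> \<omega> (Complex t1 t2)) = - Im ?A / (2 * pi) - 2 * pi * (t2 * Re \<omega>)
      - Im (Phi \<zeta> (Complex t1 t2)) / (2 * pi) + pi * (1 - 2 * Im \<omega>) * t1"
    unfolding Re_f_fun by (simp add: diff_divide_distrib algebra_simps)
  ultimately show ?thesis
    by linarith
qed

lemma norm_g_fun_le:
  assumes "1 \<le> \<bar>t1\<bar>"
  shows "norm (g_fun (Complex t1 t2)) \<le> 2"
proof -
  define v where "v = exp (2 * of_real pi * Complex t1 t2)"
  define e where "e = exp (2 * pi * t1)"
  define n where "n = norm (1 - v)"
  have "\<bar>1 - e\<bar> \<le> n"
    using norm_triangle_ineq3[of 1 v] by (simp add: n_def v_def e_def)
  moreover have "2 \<le> e \<or> e \<le> 1/3"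
  proof (cases "1 \<le> t1")
    case True
    then have "2 \<le> 1 + 2 * pi * t1"
      using pi_gt3 mult_left_mono[of 1 t1 "2 * pi"] by linarith
    moreover have "1 + 2 * pi * t1 \<le> e"
      unfolding e_def by (rule exp_ge_add_one_self)
    ultimately show ?thesis
      by linarith
  next
    case False
    then show ?thesis
      using assms exp_two_pi_le_third[of t1] by (simp add: e_def)
  qed
  ultimately have n: "0 < n" "e \<le> 4 * n"
    by auto
  have "norm (g_fun (Complex t1 t2)) = exp (pi * t1 - ln n / 2)"
    using n by (simp add: g_fun_def norm_exp_eq_Re n_def v_def)
  moreover have "exp (pi * t1 - ln n / 2) ^ 2 = e / n"
    using n by (simp add: e_def exp_diff power2_eq_square flip: exp_add)
  ultimately have "norm (g_fun (Complex t1 t2)) ^ 2 \<le> 2 ^ 2"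
    using n by (simp add: divide_le_eq)
  then show ?thesis
    by (rule power2_le_imp_le) simp
qed

lemma Re_f_fun_le_linear:
  assumes "0 < Im \<omega>" "Im \<omega> < 1/2"
  obtains c T where "0 < c"
    "\<And>t1 t2. T \<le> \<bar>t1\<bar> \<Longrightarrow> -1/2 < t2 \<Longrightarrow> t2 < 0 \<Longrightarrow>
       Re (f_fun \<zeta> \<omega> (Complex t1 t2)) \<le> - c * \<bar>t1\<bar>"
proof -
  define a where "a = Im \<omega>"
  define B where "B = norm (Li2 (- exp (2 * of_real pi * of_real \<zeta>))) / (2 * pi) + pi * \<bar>Re \<omega>\<bar>"
  obtain S where S: "0 \<le> S"
    "\<And>s t2. S \<le> s \<Longrightarrow> -1/2 < t2 \<Longrightarrow> t2 < 0 \<Longrightarrow>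
       2 * pi * (pi - pi * a) * (s - S) - 2 \<le> Im (Phi \<zeta> (Complex s t2))"
    using Im_Phi_ge_linear[of "pi * a"] assms by (auto simp: a_def)
  define K where "K = B + 1/pi + pi * (1 - a) * S"
  define c where "c = min (pi * a) (pi * (1 - 2 * a)) / 2"
  have a: "0 < pi * a" "0 < pi * (1 - 2 * a)"
    using assms by (simp_all add: a_def)
  then have c: "0 < c" "2 * c \<le> pi * a" "2 * c \<le> pi * (1 - 2 * a)"
    by (auto simp: c_def)
  have "0 \<le> pi * (1 - a) * S"
    using assms S(1) by (simp add: a_def)
  have decay: "Re (f_fun \<zeta> \<omega> (Complex t1 t2)) \<le> K - 2 * c * \<bar>t1\<bar>"
    if t1: "S + \<bar>\<zeta>\<bar> + 1 \<le> \<bar>t1\<bar>" and t2: "-1/2 < t2" "t2 < 0" for t1 t2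
  proof (cases "0 \<le> t1")
    case True
    have "(2 * pi * (pi - pi * a) * (t1 - S) - 2) / (2 * pi) \<le> Im (Phi \<zeta> (Complex t1 t2)) / (2 * pi)"
      using S(2)[OF _ t2, of t1] t1 True by (intro divide_right_mono) auto
    then have "pi * (1 - a) * (t1 - S) - 1/pi \<le> Im (Phi \<zeta> (Complex t1 t2)) / (2 * pi)"
      by (simp add: field_simps)
    moreover have "2 * c * t1 \<le> pi * a * t1"
      using c True by (intro mult_right_mono) auto
    moreover have "- (pi * (1 - a) * (t1 - S)) + pi * (1 - 2 * a) * t1 = pi * (1 - a) * S - pi * a * t1"
      by (simp add: algebra_simps)
    ultimately show ?thesis
      using Re_f_fun_le[OF t2, of \<zeta> \<omega> t1] True by (simp add: K_def B_def a_def)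
  next
    case False
    have "- Im (Phi \<zeta> (Complex t1 t2)) / (2 * pi) \<le> 1/pi"
      using abs_Im_Phi_le[of t1 \<zeta> t2] t1 False S(1) by (simp add: field_simps abs_le_iff)
    moreover have "pi * (1 - 2 * a) * t1 \<le> 2 * c * t1"
      using c False by (intro mult_right_mono_neg) auto
    ultimately show ?thesis
      using Re_f_fun_le[OF t2, of \<zeta> \<omega> t1, folded a_def B_def] False \<open>0 \<le> pi * (1 - a) * S\<close>
      unfolding K_def by linarith
  qed
  show ?thesis
  proof (rule that[OF c(1)])
    fix t1 t2 :: real
    assume t1: "max (S + \<bar>\<zeta>\<bar> + 1) (K / c) \<le> \<bar>t1\<bar>" and t2: "-1/2 < t2" "t2 < 0"
    then have "K \<le> c * \<bar>t1\<bar>"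
      using c(1) by (simp add: divide_le_eq mult.commute)
    then show "Re (f_fun \<zeta> \<omega> (Complex t1 t2)) \<le> - c * \<bar>t1\<bar>"
      using decay[OF _ t2, of t1] t1 by simp
  qed
qed

theorem lemma4p2:
  fixes \<zeta> :: real and \<omega> :: complex
  assumes "0 < Im \<omega>" and "Im \<omega> < 1/2"
  shows "\<exists>C>0. \<exists>c>0. \<exists>T. \<exists>b0>0. \<forall>b t1 t2.
           0 < b \<and> b < b0 \<and> T \<le> \<bar>t1\<bar> \<and> -1/2 < t2 \<and> t2 < 0 \<longrightarrow>
           norm (exp (f_fun \<zeta> \<omega> (Complex t1 t2) / (of_real b)\<^sup>2) * g_fun (Complex t1 t2))
             \<le> C * exp (- (c / b\<^sup>2) * \<bar>t1\<bar>)"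
proof -
  obtain c T where c: "0 < c" and decay: "\<And>t1 t2. T \<le> \<bar>t1\<bar> \<Longrightarrow> -1/2 < t2 \<Longrightarrow> t2 < 0 \<Longrightarrow>
      Re (f_fun \<zeta> \<omega> (Complex t1 t2)) \<le> - c * \<bar>t1\<bar>"
    using Re_f_fun_le_linear[OF assms] by blast
  have bound: "norm (exp (f_fun \<zeta> \<omega> (Complex t1 t2) / (of_real b)\<^sup>2) * g_fun (Complex t1 t2))
      \<le> 2 * exp (- (c / b\<^sup>2) * \<bar>t1\<bar>)"
    if b: "0 < b" and t1: "max T 1 \<le> \<bar>t1\<bar>" and t2: "-1/2 < t2" "t2 < 0" for b t1 t2
  proof -
    have "Re (f_fun \<zeta> \<omega> (Complex t1 t2)) / b\<^sup>2 \<le> - c * \<bar>t1\<bar> / b\<^sup>2"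
      using decay[OF _ t2, of t1] t1 b by (intro divide_right_mono) auto
    then have "norm (exp (f_fun \<zeta> \<omega> (Complex t1 t2) / (of_real b)\<^sup>2)) \<le> exp (- (c / b\<^sup>2) * \<bar>t1\<bar>)"
      by (simp add: norm_exp_eq_Re Re_divide_of_real flip: of_real_power)
    then show ?thesis
      using norm_g_fun_le[of t1 t2] t1 by (simp add: norm_mult mult_mono' mult.commute)
  qed
  show ?thesis
    apply (rule exI[of _ 2], simp)
    apply (rule exI[of _ c], simp add: c)
    apply (rule exI[of _ "max T 1"], rule exI[of _ 1])
    using bound by simp
qed

end
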